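(* Let $\lambda_1,\lambda_2\ge0$ with $\lambda_1+\lambda_2(p-1)>0$, and let $w_i=\lambda_1+\lambda_2(p-i)$ for $i=1,\dots,p$. Let $\mathbf A\in\mathbb R^{n\times p}$ with columns $\mathbf a_1,\dots,\mathbf a_p$, let $\mathbf y\in\mathbb R^n$, and let $\widehat{\mathbf x}$ be any minimizer of $\|\mathbf A\mathbf x-\mathbf y\|_1+\sum_{i=1}^p w_i|x|_{[i]}$ over $\mathbf x\in\mathbb R^p$. Then for every pair $(i,j)$ with $\|\operatorname{sign}(\widehat x_i)\mathbf a_i-\operatorname{sign}(\widehat x_j)\mathbf a_j\|_1<\lambda_2$ we have $|\widehat x_i|=|\widehat x_j|$. Moreover, if the columns satisfy $\mathbf 1^T\mathbf a_k=0$ and $\|\mathbf a_k\|_2=1$ for all $k$, and $\rho_{ij}=\mathbf a_i^T\mathbf a_j$, then for every pair $(i,j)$ with $\sqrt{n(2-2\rho_{ij}\operatorname{sign}(\widehat x_i\widehat x_j))}<\lambda_2$ we have $|\widehat x_i|=|\widehat x_j|$.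
   Context: $|x|_{[i]}$ denotes the $i$-th largest component of $\mathbf x$ in magnitude; $\mathbf 1$ is the all-ones vector; $\operatorname{sign}$ denotes the sign function. *)

theory Defs
  imports Complex_Main
begin

text \<open>Vectors in R^p are rendered as functions nat => real, only indices 0..p-1 matter
  (0-based). A matrix in R^(n x p) is a function nat => nat => real, entry (r,k) = A r k.\<close>

definition sorted_abs :: "nat \<Rightarrow> (nat \<Rightarrow> real) \<Rightarrow> real list" where
  "sorted_abs p x = rev (sort (map (\<lambda>k. \<bar>x k\<bar>) [0..<p]))"

definition abs_kth :: "nat \<Rightarrow> (nat \<Rightarrow> real) \<Rightarrow> nat \<Rightarrow> real" where
  "abs_kth p x i = sorted_abs p x ! (i - 1)"

definition lad_oscar_obj ::
  "nat \<Rightarrow> nat \<Rightarrow> (nat \<Rightarrow> nat \<Rightarrow> real) \<Rightarrow> (nat \<Rightarrow> real) \<Rightarrow> real \<Rightarrow> real \<Rightarrow> (nat \<Rightarrow> real) \<Rightarrow> real" where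
  "lad_oscar_obj n p A y l1 l2 x =
     (\<Sum>r<n. \<bar>(\<Sum>k<p. A r k * x k) - y r\<bar>)
     + (\<Sum>i=1..p. (l1 + l2 * (real p - real i)) * abs_kth p x i)"

end

theory Submission
  imports Defs "HOL-Library.Multiset" "HOL-Analysis.Convex"
begin

text \<open>The ordered weighted penalty equals the OSCAR penalty
  l1 \<Sum>k |x_k| + l2 \<Sum>k<l max(|x_k|, |x_l|). If |x_j| < |x_i|, move d = (|x_i| - |x_j|)/2 of
  magnitude from x_i to x_j along their signs. Since every max(c, -) is midpoint convex, the
  pairwise maxima drop by at least d in total, so the penalty drops by at least l2 d, while the
  loss grows by at most d \<parallel>sgn(x_i) a_i - sgn(x_j) a_j\<parallel>_1 < l2 d; hence a minimizer has
  |x_i| = |x_j|. The second claim follows from \<parallel>v\<parallel>_1 \<le> \<surd>n \<parallel>v\<parallel>_2.\<close>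

lemma sum_change_two:
  fixes g g' :: "nat \<Rightarrow> 'a::ab_group_add"
  assumes "i < p" "j < p" "i \<noteq> j" "\<And>k. k \<noteq> i \<Longrightarrow> k \<noteq> j \<Longrightarrow> g' k = g k"
  shows "(\<Sum>k<p. g' k) = (\<Sum>k<p. g k) + (g' i - g i) + (g' j - g j)"
proof -
  have "(\<Sum>k<p. g' k - g k) = (\<Sum>k\<in>{i,j}. g' k - g k)"
    by (rule sum.mono_neutral_right) (use assms in auto)
  then show ?thesis
    using assms(3) by (simp add: sum_subtractf algebra_simps)
qed

definition max_sum :: "nat \<Rightarrow> (nat \<Rightarrow> real) \<Rightarrow> real" where
  "max_sum p t = (\<Sum>k<p. \<Sum>l<p. max (t k) (t l))"

text \<open>max_sum p t - \<Sum>k<p. t k is twice \<Sum>k<l<p. max (t k) (t l), so this is the OSCAR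
  penalty in its original pairwise form.\<close>

definition oscar_penalty :: "nat \<Rightarrow> real \<Rightarrow> real \<Rightarrow> (nat \<Rightarrow> real) \<Rightarrow> real" where
  "oscar_penalty p l1 l2 t = l1 * (\<Sum>k<p. t k) + l2 * (max_sum p t - (\<Sum>k<p. t k)) / 2"

lemma sum_list_max_pairs_sorted:
  fixes L :: "real list"
  assumes "sorted_wrt (\<ge>) L"
  shows "(\<Sum>a\<leftarrow>L. \<Sum>b\<leftarrow>L. max a b)
           = (\<Sum>m<length L. (2 * (real (length L) - 1 - real m) + 1) * L ! m)"
  using assms
proof (induction L)
  case Nil
  then show ?case by simp
next
  case (Cons a L)
  have ge: "\<forall>b\<in>set L. b \<le> a" using Cons.prems by simp
  have row: "(\<Sum>b\<leftarrow>L. max a b) = a * length L"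
    using ge by (simp add: max_absorb1 sum_list_triv cong: map_cong)
  have col: "(\<Sum>c\<leftarrow>L. max c a) = a * length L"
    using ge by (simp add: max_absorb2 sum_list_triv cong: map_cong)
  have "(\<Sum>c\<leftarrow>a # L. \<Sum>b\<leftarrow>a # L. max c b)
      = a + 2 * (a * length L) + (\<Sum>c\<leftarrow>L. \<Sum>b\<leftarrow>L. max c b)"
    using row col by (simp add: sum_list_addf)
  also have "\<dots> = (2 * (real (length (a # L)) - 1 - real 0) + 1) * (a # L) ! 0
     + (\<Sum>m<length L. (2 * (real (length (a # L)) - 1 - real (Suc m)) + 1) * (a # L) ! Suc m)"
    using Cons by (simp add: algebra_simps)
  also have "\<dots> = (\<Sum>m<length (a # L). (2 * (real (length (a # L)) - 1 - real m) + 1) * (a # L) ! m)"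
    by (simp only: length_Cons sum.lessThan_Suc_shift)
  finally show ?case .
qed

lemma ordered_weighted_sum_eq_oscar_penalty:
  "(\<Sum>i=1..p. (l1 + l2 * (real p - real i)) * abs_kth p x i) = oscar_penalty p l1 l2 (\<lambda>k. \<bar>x k\<bar>)"
proof -
  define L where "L = sorted_abs p x"
  define M where "M = map (\<lambda>k. \<bar>x k\<bar>) [0..<p]"
  have perm: "mset L = mset M" by (simp add: L_def M_def sorted_abs_def)
  have len: "length L = p" by (simp add: L_def sorted_abs_def)
  have sorted: "sorted_wrt (\<ge>) L" by (simp add: L_def sorted_abs_def sorted_wrt_rev)
  have perm_sum: "sum_list (map f L) = sum_list (map f M)" for f :: "real \<Rightarrow> real"
    by (metis perm mset_map sum_mset_sum_list)
  have "(\<Sum>k<p. \<bar>x k\<bar>) = sum_list M"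
    by (simp add: M_def sum_list_distinct_conv_sum_set atLeast0LessThan)
  also have "\<dots> = (\<Sum>m<p. L ! m)"
    using perm_sum[of id] by (simp add: sum_list_sum_nth len atLeast0LessThan)
  finally have sum_eq: "(\<Sum>k<p. \<bar>x k\<bar>) = (\<Sum>m<p. L ! m)" .
  have "max_sum p (\<lambda>k. \<bar>x k\<bar>) = (\<Sum>a\<leftarrow>M. \<Sum>b\<leftarrow>M. max a b)"
    by (simp add: max_sum_def M_def sum_list_distinct_conv_sum_set atLeast0LessThan o_def)
  also have "\<dots> = (\<Sum>a\<leftarrow>L. \<Sum>b\<leftarrow>L. max a b)"
    using perm_sum[of "\<lambda>a. \<Sum>b\<leftarrow>L. max a b"] perm_sum by simp
  also have "\<dots> = (\<Sum>m<p. (2 * (real p - 1 - real m) + 1) * L ! m)"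
    using sum_list_max_pairs_sorted[OF sorted] len by simp
  finally have max_sum_eq: "max_sum p (\<lambda>k. \<bar>x k\<bar>) = (\<Sum>m<p. (2 * (real p - 1 - real m) + 1) * L ! m)" .
  have "(\<Sum>i=1..p. (l1 + l2 * (real p - real i)) * abs_kth p x i)
      = (\<Sum>m<p. (l1 + l2 * (real p - 1 - real m)) * L ! m)"
    by (simp add: sum.atLeast1_atMost_eq abs_kth_def L_def algebra_simps)
  also have "\<dots> = oscar_penalty p l1 l2 (\<lambda>k. \<bar>x k\<bar>)"
    unfolding oscar_penalty_def sum_eq max_sum_eq
    by (simp add: sum_subtractf[symmetric] sum_distrib_left sum.distrib[symmetric]
        sum_divide_distrib algebra_simps) (rule sum.cong; simp add: field_simps)
  finally show ?thesis .
qed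

lemma max_sum_minus_sum:
  "max_sum p t - (\<Sum>k<p. t k) = (\<Sum>k<p. \<Sum>l\<in>{..<p} - {k}. max (t k) (t l))"
proof -
  have "(\<Sum>l<p. max (t k) (t l)) = t k + (\<Sum>l\<in>{..<p} - {k}. max (t k) (t l))" if "k < p" for k
    using sum.remove[of "{..<p}" k "\<lambda>l. max (t k) (t l)"] that by simp
  then show ?thesis
    by (simp add: max_sum_def sum_subtractf[symmetric])
qed

lemma oscar_penalty_mono:
  assumes "l1 \<ge> 0" "l2 \<ge> 0" and le: "\<And>k. k < p \<Longrightarrow> t k \<le> s k"
  shows "oscar_penalty p l1 l2 t \<le> oscar_penalty p l1 l2 s"
proof -
  have "(\<Sum>k<p. t k) \<le> (\<Sum>k<p. s k)"
    using le by (intro sum_mono) simp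
  moreover have "max_sum p t - (\<Sum>k<p. t k) \<le> max_sum p s - (\<Sum>k<p. s k)"
    unfolding max_sum_minus_sum using le by (intro sum_mono max.mono) auto
  ultimately show ?thesis
    unfolding oscar_penalty_def using assms(1,2)
    by (intro add_mono mult_left_mono divide_right_mono) auto
qed

lemma max_sum_average_pair:
  assumes ij: "i < p" "j < p" "i \<noteq> j" and le: "t j \<le> t i"
  defines "m \<equiv> (t i + t j) / 2"
  shows "max_sum p (t(i := m, j := m)) \<le> max_sum p t - (t i - t j)"
proof -
  define t' where "t' = t(i := m, j := m)"
  have t'_out: "t' k = t k" if "k \<noteq> i" "k \<noteq> j" for k
    using that by (simp add: t'_def)
  have t'_ij: "t' i = m" "t' j = m"
    using ij by (simp_all add: t'_def)
  \<comment> \<open>Row sums: averaging the pair lowers every row, and the two rows at m by (t i - t j) / 2.\<close>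
  define R where "R s c = (\<Sum>l<p. max c (s l))" for s :: "nat \<Rightarrow> real" and c
  have midpoint: "2 * max c m \<le> max c (t i) + max c (t j)" for c
    by (simp add: m_def max_def)
  have R_t': "R t' c = R t c + (max c m - max c (t i)) + (max c m - max c (t j))" for c
    unfolding R_def
    by (rule sum_change_two[OF ij, where g' = "\<lambda>l. max c (t' l)" and g = "\<lambda>l. max c (t l)",
          simplified t'_ij]) (simp add: t'_out)
  have R_mono: "R t' c \<le> R t c" for c
    using R_t' midpoint[of c] by simp
  have R_at_m: "R t' m = R t m - (t i - t j) / 2"
  proof -
    have "max m (t i) = t i" "max m (t j) = m"
      using le by (simp_all add: m_def)
    then show ?thesis
      using R_t'[of m] by (simp add: m_def field_simps)
  qed
  have "max_sum p t' + (t i - t j) \<le> (\<Sum>k<p. R t (t' k))"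
  proof -
    have "(R t (t' i) - R t' (t' i)) + (R t (t' j) - R t' (t' j))
            \<le> (\<Sum>k<p. R t (t' k) - R t' (t' k))"
      using sum_mono2[of "{..<p}" "{i,j}" "\<lambda>k. R t (t' k) - R t' (t' k)"] R_mono ij by auto
    then show ?thesis
      using R_at_m t'_ij by (simp add: max_sum_def R_def sum_subtractf)
  qed
  also have "(\<Sum>k<p. R t (t' k)) = max_sum p t + (R t m - R t (t i)) + (R t m - R t (t j))"
    unfolding max_sum_def
    by (subst sum_change_two[OF ij]) (simp_all add: R_def t'_out t'_ij)
  also have "\<dots> \<le> max_sum p t"
  proof -
    have "2 * R t m \<le> R t (t i) + R t (t j)"
      unfolding R_def sum_distrib_left sum.distrib[symmetric]
      by (intro sum_mono) (simp add: m_def max_def)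
    then show ?thesis by simp
  qed
  finally show ?thesis by (simp add: t'_def)
qed

lemma oscar_penalty_average_pair:
  assumes "i < p" "j < p" "i \<noteq> j" "t j \<le> t i" "l2 \<ge> 0"
  defines "m \<equiv> (t i + t j) / 2"
  shows "oscar_penalty p l1 l2 (t(i := m, j := m)) \<le> oscar_penalty p l1 l2 t - l2 * (t i - t j) / 2"
proof -
  have "(\<Sum>k<p. (t(i := m, j := m)) k) = (\<Sum>k<p. t k)"
    using assms(1-3) by (subst sum_change_two[of i p j _ t]) (simp_all add: m_def field_simps)
  moreover have "l2 * max_sum p (t(i := m, j := m)) \<le> l2 * (max_sum p t - (t i - t j))"
    using max_sum_average_pair[OF assms(1-4)] assms(5) unfolding m_def by (rule mult_left_mono)
  ultimately show ?thesis
    unfolding oscar_penalty_def by (simp add: field_simps)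
qed

lemma abs_diff_sgn_mult: "0 \<le> d \<Longrightarrow> d \<le> \<bar>a\<bar> \<Longrightarrow> \<bar>a - d * sgn a\<bar> = \<bar>a\<bar> - (d::real)"
  by (cases a "0::real" rule: linorder_cases) auto

lemma abs_add_sgn_mult_le: "0 \<le> d \<Longrightarrow> \<bar>a + d * sgn a\<bar> \<le> \<bar>a\<bar> + (d::real)"
  by (cases a "0::real" rule: linorder_cases) auto

lemma sum_abs_residual_le:
  fixes A :: "nat \<Rightarrow> nat \<Rightarrow> real"
  shows "(\<Sum>r<n. \<bar>(\<Sum>k<p. A r k * x' k) - y r\<bar>)
           \<le> (\<Sum>r<n. \<bar>(\<Sum>k<p. A r k * x k) - y r\<bar>) + (\<Sum>r<n. \<bar>\<Sum>k<p. A r k * (x' k - x k)\<bar>)"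
proof -
  have "\<bar>(\<Sum>k<p. A r k * x' k) - y r\<bar>
          \<le> \<bar>(\<Sum>k<p. A r k * x k) - y r\<bar> + \<bar>\<Sum>k<p. A r k * (x' k - x k)\<bar>" for r
  proof -
    have "(\<Sum>k<p. A r k * x' k) - y r = ((\<Sum>k<p. A r k * x k) - y r) + (\<Sum>k<p. A r k * (x' k - x k))"
      by (simp add: algebra_simps sum_subtractf)
    then show ?thesis by (simp only: abs_triangle_ineq)
  qed
  then show ?thesis
    by (simp add: sum.distrib[symmetric] sum_mono)
qed

lemma lad_oscar_obj_eq:
  "lad_oscar_obj n p A y l1 l2 x
     = (\<Sum>r<n. \<bar>(\<Sum>k<p. A r k * x k) - y r\<bar>) + oscar_penalty p l1 l2 (\<lambda>k. \<bar>x k\<bar>)"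
  unfolding lad_oscar_obj_def ordered_weighted_sum_eq_oscar_penalty ..

lemma lad_oscar_obj_averaging_decreases:
  fixes A :: "nat \<Rightarrow> nat \<Rightarrow> real"
  assumes "l1 \<ge> 0" "l2 \<ge> 0" and ij: "i < p" "j < p" and lt: "\<bar>x j\<bar> < \<bar>x i\<bar>"
    and close: "(\<Sum>r<n. \<bar>sgn (x i) * A r i - sgn (x j) * A r j\<bar>) < l2"
  defines "d \<equiv> (\<bar>x i\<bar> - \<bar>x j\<bar>) / 2"
  shows "lad_oscar_obj n p A y l1 l2 (x(i := x i - d * sgn (x i), j := x j + d * sgn (x j)))
           < lad_oscar_obj n p A y l1 l2 x"
proof -
  define x' where "x' = x(i := x i - d * sgn (x i), j := x j + d * sgn (x j))"
  have "i \<noteq> j" using lt by auto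
  note ij = ij this
  have d_pos: "d > 0" using lt by (simp add: d_def)
  have x'_out: "x' k = x k" if "k \<noteq> i" "k \<noteq> j" for k
    using that by (simp add: x'_def)
  have x'_i: "x' i = x i - d * sgn (x i)" and x'_j: "x' j = x j + d * sgn (x j)"
    using ij by (simp_all add: x'_def)
  have "(\<Sum>k<p. A r k * (x' k - x k)) = - d * (sgn (x i) * A r i - sgn (x j) * A r j)" for r
    using sum_change_two[OF ij, where g' = "\<lambda>k. A r k * (x' k - x k)" and g = "\<lambda>_. 0"]
    by (simp add: x'_out x'_i x'_j algebra_simps)
  then have loss: "(\<Sum>r<n. \<bar>(\<Sum>k<p. A r k * x' k) - y r\<bar>)
      \<le> (\<Sum>r<n. \<bar>(\<Sum>k<p. A r k * x k) - y r\<bar>) + d * (\<Sum>r<n. \<bar>sgn (x i) * A r i - sgn (x j) * A r j\<bar>)"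
    using sum_abs_residual_le[where n = n and p = p and A = A and y = y and x' = x' and x = x] d_pos by (simp add: abs_mult sum_distrib_left)
  define t where "t k = \<bar>x k\<bar>" for k
  define m where "m = (t i + t j) / 2"
  \<comment> \<open>If x j = 0, the j-th coordinate stays 0 and only |x' j| \<le> m holds; monotonicity covers it.\<close>
  have m_eq: "m = \<bar>x i\<bar> - d" "m = \<bar>x j\<bar> + d"
    by (simp_all add: m_def t_def d_def field_simps)
  have "d \<le> \<bar>x i\<bar>"
    using lt by (simp add: d_def)
  then have "\<bar>x' i\<bar> = m"
    using abs_diff_sgn_mult[of d "x i"] d_pos by (simp add: x'_i m_eq(1))
  moreover have "\<bar>x' j\<bar> \<le> m"
    using abs_add_sgn_mult_le[of d "x j"] d_pos by (simp add: x'_j m_eq(2))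
  ultimately have "\<bar>x' k\<bar> \<le> (t(i := m, j := m)) k" for k
    by (simp add: x'_out t_def)
  then have "oscar_penalty p l1 l2 (\<lambda>k. \<bar>x' k\<bar>) \<le> oscar_penalty p l1 l2 (t(i := m, j := m))"
    using assms(1,2) by (rule oscar_penalty_mono[rotated 2])
  also have "\<dots> \<le> oscar_penalty p l1 l2 t - l2 * d"
    using oscar_penalty_average_pair[OF ij, of t l2 l1] lt assms(2) by (simp add: m_def t_def d_def)
  finally have "lad_oscar_obj n p A y l1 l2 x'
      \<le> lad_oscar_obj n p A y l1 l2 x + d * ((\<Sum>r<n. \<bar>sgn (x i) * A r i - sgn (x j) * A r j\<bar>) - l2)"
    using loss unfolding lad_oscar_obj_eq t_def[symmetric] by (simp add: algebra_simps)
  also have "\<dots> < lad_oscar_obj n p A y l1 l2 x"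
    using d_pos close by (simp add: mult_pos_neg)
  finally show ?thesis by (simp add: x'_def)
qed

lemma lad_oscar_minimizer_abs_eq:
  fixes A :: "nat \<Rightarrow> nat \<Rightarrow> real"
  assumes "l1 \<ge> 0" "l2 \<ge> 0"
    and min: "\<forall>x. lad_oscar_obj n p A y l1 l2 xh \<le> lad_oscar_obj n p A y l1 l2 x"
    and ij: "i < p" "j < p"
    and close: "(\<Sum>r<n. \<bar>sgn (xh i) * A r i - sgn (xh j) * A r j\<bar>) < l2"
  shows "\<bar>xh i\<bar> = \<bar>xh j\<bar>"
proof (rule ccontr)
  have close': "(\<Sum>r<n. \<bar>sgn (xh j) * A r j - sgn (xh i) * A r i\<bar>) < l2"
    using close by (simp add: abs_minus_commute)
  assume "\<bar>xh i\<bar> \<noteq> \<bar>xh j\<bar>"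
  then consider "\<bar>xh j\<bar> < \<bar>xh i\<bar>" | "\<bar>xh i\<bar> < \<bar>xh j\<bar>"
    by linarith
  then show False
  proof cases
    case 1
    then show False
      using lad_oscar_obj_averaging_decreases[OF assms(1,2) ij 1 close] min by (meson not_le)
  next
    case 2
    then show False
      using lad_oscar_obj_averaging_decreases[OF assms(1,2) ij(2,1) 2 close'] min by (meson not_le)
  qed
qed

lemma sum_abs_le_sqrt_card_sum_squares:
  fixes b :: "nat \<Rightarrow> real"
  shows "(\<Sum>r<n. \<bar>b r\<bar>) \<le> sqrt (real n * (\<Sum>r<n. (b r)\<^sup>2))"
proof (rule real_le_rsqrt)
  show "(\<Sum>r<n. \<bar>b r\<bar>)\<^sup>2 \<le> real n * (\<Sum>r<n. (b r)\<^sup>2)"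
    using Cauchy_Schwarz_ineq_sum[of "\<lambda>_. 1" "\<lambda>r. \<bar>b r\<bar>" "{..<n}"] by simp
qed

lemma sum_abs_signed_diff_le:
  fixes a b :: "nat \<Rightarrow> real"
  assumes "(\<Sum>r<n. (a r)\<^sup>2) = 1" "(\<Sum>r<n. (b r)\<^sup>2) = 1" "\<bar>s\<bar> \<le> 1" "\<bar>s'\<bar> \<le> 1"
  shows "(\<Sum>r<n. \<bar>s * a r - s' * b r\<bar>) \<le> sqrt (real n * (2 - 2 * (\<Sum>r<n. a r * b r) * (s * s')))"
proof -
  have "(\<Sum>r<n. (s * a r - s' * b r)\<^sup>2)
          = (\<Sum>r<n. s\<^sup>2 * (a r)\<^sup>2 + s'\<^sup>2 * (b r)\<^sup>2 - 2 * (s * s') * (a r * b r))"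
    by (rule sum.cong) (simp_all add: power2_eq_square algebra_simps)
  also have "\<dots> = s\<^sup>2 * (\<Sum>r<n. (a r)\<^sup>2) + s'\<^sup>2 * (\<Sum>r<n. (b r)\<^sup>2) - 2 * (\<Sum>r<n. a r * b r) * (s * s')"
    by (simp add: sum.distrib sum_subtractf sum_distrib_left sum_distrib_right ac_simps)
  also have "\<dots> \<le> 2 - 2 * (\<Sum>r<n. a r * b r) * (s * s')"
    using assms abs_le_square_iff[of s 1] abs_le_square_iff[of s' 1] by simp
  finally have "real n * (\<Sum>r<n. (s * a r - s' * b r)\<^sup>2) \<le> real n * (2 - 2 * (\<Sum>r<n. a r * b r) * (s * s'))"
    by (rule mult_left_mono) simp
  then show ?thesis
    using sum_abs_le_sqrt_card_sum_squares[of "\<lambda>r. s * a r - s' * b r" n] real_sqrt_le_mono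
    by (meson order_trans)
qed

theorem corollary4:
  fixes n p :: nat and A :: "nat \<Rightarrow> nat \<Rightarrow> real" and y xh :: "nat \<Rightarrow> real"
    and l1 l2 :: real
  assumes "l1 \<ge> 0" and "l2 \<ge> 0" and "l1 + l2 * (real p - 1) > 0"
    and min: "\<forall>x. lad_oscar_obj n p A y l1 l2 xh \<le> lad_oscar_obj n p A y l1 l2 x"
  shows "(\<forall>i<p. \<forall>j<p.
            (\<Sum>r<n. \<bar>sgn (xh i) * A r i - sgn (xh j) * A r j\<bar>) < l2
              \<longrightarrow> \<bar>xh i\<bar> = \<bar>xh j\<bar>)
       \<and> ((\<forall>k<p. (\<Sum>r<n. A r k) = 0 \<and> sqrt (\<Sum>r<n. (A r k)\<^sup>2) = 1) \<longrightarrow>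
          (\<forall>i<p. \<forall>j<p.
            sqrt (real n * (2 - 2 * (\<Sum>r<n. A r i * A r j) * sgn (xh i * xh j))) < l2
              \<longrightarrow> \<bar>xh i\<bar> = \<bar>xh j\<bar>))"
proof -
  have grouping: "\<bar>xh i\<bar> = \<bar>xh j\<bar>"
    if "i < p" "j < p" "(\<Sum>r<n. \<bar>sgn (xh i) * A r i - sgn (xh j) * A r j\<bar>) < l2" for i j
    using lad_oscar_minimizer_abs_eq[OF assms(1,2) min that] .
  moreover have "\<bar>xh i\<bar> = \<bar>xh j\<bar>"
    if unit: "\<forall>k<p. (\<Sum>r<n. A r k) = 0 \<and> sqrt (\<Sum>r<n. (A r k)\<^sup>2) = 1" and ij: "i < p" "j < p"
      and corr: "sqrt (real n * (2 - 2 * (\<Sum>r<n. A r i * A r j) * sgn (xh i * xh j))) < l2" for i j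
  proof -
    have "(\<Sum>r<n. \<bar>sgn (xh i) * A r i - sgn (xh j) * A r j\<bar>)
            \<le> sqrt (real n * (2 - 2 * (\<Sum>r<n. A r i * A r j) * sgn (xh i * xh j)))"
      using sum_abs_signed_diff_le[where n = n and a = "\<lambda>r. A r i" and b = "\<lambda>r. A r j"
          and s = "sgn (xh i)" and s' = "sgn (xh j)"] unit ij
      by (simp add: sgn_mult abs_sgn_eq)
    then show ?thesis
      using grouping[OF ij] corr by linarith
  qed
  ultimately show ?thesis by blast
qed

end
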